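(* Let $L$ be an allowable $2l$-cycle chain for $\mathcal H_{m,\mathcal B,S}$. Then the number of distinct $2l$-cycles in the Tanner graph of $\mathcal H_{m,\mathcal B,S}$ corresponding to $L$ equals $m/n(L)$.
   Context: Let $m\ge1$, $\mathcal B=[B_1,\ldots,B_k]$ a list of subsets of a finite set of row-block indices, and $s_{i,j}\in\mathbb{Z}_m$ for $i\in B_j$. $\mathcal H_{m,\mathcal B,S}$ is the block matrix whose $(i,j)$ block is the $m\times m$ circulant permutation matrix with entry $(x,y)$ equal to 1 iff $x\equiv y+s_{i,j}\pmod m$ when $i\in B_j$, and zero otherwise; its Tanner graph has check nodes $c(i,x)$, variable nodes $u(j,y)$, with $c(i,x)\sim u(j,y)$ iff $i\in B_j$ and $x\equiv y+s_{i,j}$. A $2l$-cycle chain ($l\ge2$) is $L=(i_0,j_0,\ldots,i_{l-1},j_{l-1})$, indices mod $l$, with $i_t,i_{t+1}\in B_{j_t}$, $i_t\ne i_{t+1}$, $j_t\ne j_{t+1}$, and $\sum_{t=0}^{l-1}(s_{i_t,j_t}-s_{i_{t+1},j_t})\equiv0\pmod m$. For $r\in\mathbb{Z}_m$: $x_0=r$, $y_t=x_t-s_{i_t,j_t}$, $x_{t+1}=y_t+s_{i_{t+1},j_t}$ (mod $m$), giving the closed walk $W_r=c(i_0,x_0),u(j_0,y_0),c(i_1,x_1),\ldots,u(j_{l-1},y_{l-1}),c(i_0,x_0)$; $L$ is allowable if for every $r$ the $2l$ vertices $c(i_t,x_t),u(j_t,y_t)$ are pairwise distinct, in which case $W_r$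 traces a $2l$-cycle (a subgraph) of the Tanner graph. A $2l$-cycle of the Tanner graph corresponds to $L$ if it is the cycle traced by $W_r$ for some $r\in\mathbb{Z}_m$. Let $e$ be the smallest integer in $\{1,\ldots,l\}$ such that $(i_{t+e},j_{t+e})=(i_t,j_t)$ for all $t$ (indices mod $l$); then $e\mid l$ and $n(L)=l/e$. *)

theory Defs
  imports Complex_Main
begin

text \<open>Vertices of the Tanner graph: check nodes c(i,x) and variable nodes u(j,y).
  Row-block indices i and column-block indices j are naturals; the list
  B = [B_0,...,B_(k-1)] is indexed from 0 (B ! j). Elements of Z_m are
  represented by integers in {0..<m} (residues mod m). The shifts s i j are
  arbitrary integers, read modulo m.\<close>

datatype vertex = CNode nat int | UNode nat int

definition tanner_adj :: "int \<Rightarrow> nat set list \<Rightarrow> (nat \<Rightarrow> nat \<Rightarrow> int) \<Rightarrow> vertex \<Rightarrow> vertex \<Rightarrow> bool" where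
  "tanner_adj m B s v w \<longleftrightarrow>
     (\<exists>i x j y. {v, w} = {CNode i x, UNode j y} \<and> 0 \<le> x \<and> x < m \<and> 0 \<le> y \<and> y < m \<and>
        j < length B \<and> i \<in> B ! j \<and> x mod m = (y + s i j) mod m)"

text \<open>A chain L = (i_0,j_0,...,i_(l-1),j_(l-1)) is the list of pairs (i_t,j_t);
  indices are taken mod l.\<close>
definition ch_i :: "(nat \<times> nat) list \<Rightarrow> nat \<Rightarrow> nat" where
  "ch_i L t = fst (L ! (t mod length L))"

definition ch_j :: "(nat \<times> nat) list \<Rightarrow> nat \<Rightarrow> nat" where
  "ch_j L t = snd (L ! (t mod length L))"

definition is_cycle_chain :: "int \<Rightarrow> nat set list \<Rightarrow> (nat \<Rightarrow> nat \<Rightarrow> int) \<Rightarrow> (nat \<times> nat) list \<Rightarrow> bool" where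
  "is_cycle_chain m B s L \<longleftrightarrow>
     length L \<ge> 2 \<and>
     (\<forall>t < length L. ch_j L t < length B \<and>
        ch_i L t \<in> B ! ch_j L t \<and> ch_i L (Suc t) \<in> B ! ch_j L t \<and>
        ch_i L t \<noteq> ch_i L (Suc t) \<and> ch_j L t \<noteq> ch_j L (Suc t)) \<and>
     (\<Sum>t<length L. s (ch_i L t) (ch_j L t) - s (ch_i L (Suc t)) (ch_j L t)) mod m = 0"

primrec walk_x :: "int \<Rightarrow> (nat \<Rightarrow> nat \<Rightarrow> int) \<Rightarrow> (nat \<times> nat) list \<Rightarrow> int \<Rightarrow> nat \<Rightarrow> int" where
  "walk_x m s L r 0 = r mod m"
| "walk_x m s L r (Suc t) =
     (walk_x m s L r t - s (ch_i L t) (ch_j L t) + s (ch_i L (Suc t)) (ch_j L t)) mod m"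

definition walk_y :: "int \<Rightarrow> (nat \<Rightarrow> nat \<Rightarrow> int) \<Rightarrow> (nat \<times> nat) list \<Rightarrow> int \<Rightarrow> nat \<Rightarrow> int" where
  "walk_y m s L r t = (walk_x m s L r t - s (ch_i L t) (ch_j L t)) mod m"

definition walk_vertex :: "int \<Rightarrow> (nat \<Rightarrow> nat \<Rightarrow> int) \<Rightarrow> (nat \<times> nat) list \<Rightarrow> int \<Rightarrow> nat \<Rightarrow> vertex" where
  "walk_vertex m s L r n =
     (if even n then CNode (ch_i L (n div 2)) (walk_x m s L r (n div 2))
      else UNode (ch_j L (n div 2)) (walk_y m s L r (n div 2)))"

definition allowable :: "int \<Rightarrow> nat set list \<Rightarrow> (nat \<Rightarrow> nat \<Rightarrow> int) \<Rightarrow> (nat \<times> nat) list \<Rightarrow> bool" where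
  "allowable m B s L \<longleftrightarrow> is_cycle_chain m B s L \<and>
     (\<forall>r\<in>{0..<m}. inj_on (walk_vertex m s L r) {0..<2 * length L})"

text \<open>The cycle (subgraph) traced by W_r, given by its set of edges
  {v_n, v_(n+1 mod 2l)}; its vertex set is the union of the edges.\<close>
definition traced_cycle :: "int \<Rightarrow> (nat \<Rightarrow> nat \<Rightarrow> int) \<Rightarrow> (nat \<times> nat) list \<Rightarrow> int \<Rightarrow> vertex set set" where
  "traced_cycle m s L r =
     (\<lambda>n. {walk_vertex m s L r n, walk_vertex m s L r ((Suc n) mod (2 * length L))})
       ` {0..<2 * length L}"

definition corresponding_cycles :: "int \<Rightarrow> (nat \<Rightarrow> nat \<Rightarrow> int) \<Rightarrow> (nat \<times> nat) list \<Rightarrow> vertex set set set" where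
  "corresponding_cycles m s L = traced_cycle m s L ` {0..<m}"

definition chain_period :: "(nat \<times> nat) list \<Rightarrow> nat" where
  "chain_period L = (LEAST e. 1 \<le> e \<and> e \<le> length L \<and>
      (\<forall>t. L ! ((t + e) mod length L) = L ! (t mod length L)))"

definition chain_n :: "(nat \<times> nat) list \<Rightarrow> nat" where
  "chain_n L = length L div chain_period L"

end

theory Submission
  imports Defs
begin

text \<open>A closed walk that visits \<open>N\<close> distinct vertices, viewed as an \<open>N\<close>-periodic sequence
  that is injective on one period, is determined by its set of edges only up to the dihedral
  group: any other such sequence with the same edges is a rotation or a reflection of it.
  For the walks \<open>W\<^sub>r\<close> of a cycle chain, a reflection is impossible because it would force two
  check (or variable) nodes at distance two along the walk to lie in the same block, and a
  rotation by \<open>2t\<close> respects the block pattern only if \<open>t\<close> is a period of the chain, i.e. a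
  multiple of \<open>e\<close>; such a rotation turns \<open>W\<^sub>r\<close> into \<open>W\<^bsub>x\<^sub>t\<^esub>\<close>. So the starting points
  tracing the same cycle as \<open>r\<close> are exactly \<open>x\<^bsub>ae\<^esub>\<close> for \<open>a < n(L)\<close>, which are distinct by
  allowability: every cycle arises from exactly \<open>n(L)\<close> of the \<open>m\<close> starting points.\<close>

definition has_period :: "(nat \<Rightarrow> 'a) \<Rightarrow> nat \<Rightarrow> bool" where
  "has_period V N \<longleftrightarrow> (\<forall>n. V (n + N) = V n)"

definition cycle_edges :: "(nat \<Rightarrow> 'a) \<Rightarrow> nat \<Rightarrow> 'a set set" where
  "cycle_edges V N = (\<lambda>n. {V n, V (Suc n)}) ` {0..<N}"

lemma has_period_add_mult:
  assumes "has_period V N" shows "V (n + c * N) = V n"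
proof (induction c)
  case (Suc c)
  have "V (n + Suc c * N) = V ((n + c * N) + N)" by (simp add: ac_simps)
  also have "\<dots> = V n" using Suc.IH assms unfolding has_period_def by simp
  finally show ?case .
qed simp

lemma has_period_mod:
  assumes "has_period V N" shows "V (n mod N) = V n"
  using has_period_add_mult[OF assms, of "n mod N" "n div N"] by simp

lemma has_period_cong:
  assumes "has_period V N" and "a mod N = b mod N" shows "V a = V b"
  by (metis assms has_period_mod)

lemma has_period_shift:
  assumes "has_period V N" shows "has_period (\<lambda>k. V (q + k)) N"
  using assms by (simp add: has_period_def add.assoc[symmetric])

lemma has_period_inj_on_eq_iff:
  assumes "has_period V N" and "inj_on V {0..<N}" and "0 < N"
  shows "V a = V b \<longleftrightarrow> a mod N = b mod N"
proof
  assume "V a = V b"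
  then have "V (a mod N) = V (b mod N)" by (simp add: has_period_mod[OF assms(1)])
  moreover have "a mod N \<in> {0..<N}" "b mod N \<in> {0..<N}" using \<open>0 < N\<close> by auto
  ultimately show "a mod N = b mod N" using inj_onD[OF assms(2)] by blast
qed (rule has_period_cong[OF assms(1)])

lemma cycle_edges_eq_range:
  assumes "has_period V N" and "0 < N"
  shows "cycle_edges V N = range (\<lambda>n. {V n, V (Suc n)})"
proof -
  have "{V n, V (Suc n)} = {V (n mod N), V (Suc (n mod N))}" for n
    using has_period_cong[OF assms(1)] by (metis mod_Suc_eq mod_mod_trivial)
  moreover have "n mod N \<in> {0..<N}" for n using \<open>0 < N\<close> by simp
  ultimately show ?thesis unfolding cycle_edges_def by blast
qed

lemma cycle_edges_shift:
  assumes "has_period V N" and "0 < N"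
  shows "cycle_edges (\<lambda>k. V (q + k)) N = cycle_edges V N"
proof -
  have "{V n, V (Suc n)} \<in> range (\<lambda>k. {V (q + k), V (q + Suc k)})" for n
  proof -
    define k where "k = (N - 1) * q + n"
    have "q + k = n + q * N" using \<open>0 < N\<close> unfolding k_def by (cases N) (simp_all add: algebra_simps)
    then have "{V n, V (Suc n)} = {V (q + k), V (q + Suc k)}"
      using has_period_add_mult[OF assms(1), of n q] has_period_add_mult[OF assms(1), of "Suc n" q]
      by simp
    then show ?thesis by blast
  qed
  then have "range (\<lambda>k. {V (q + k), V (q + Suc k)}) = range (\<lambda>n. {V n, V (Suc n)})"
    by auto
  then show ?thesis
    using cycle_edges_eq_range[OF has_period_shift[OF assms(1)] assms(2)]
      cycle_edges_eq_range[OF assms] by simp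
qed

lemma cycle_edges_neighbour_iff:
  assumes "has_period V N" and "inj_on V {0..<N}" and "0 < N"
  shows "{V q, w} \<in> cycle_edges V N \<longleftrightarrow> w = V (Suc q) \<or> w = V (q + N - 1)"
proof -
  note eq_iff = has_period_inj_on_eq_iff[OF assms]
  note edges = cycle_edges_eq_range[OF assms(1,3)]
  have wrap: "V (Suc (q + N - 1)) = V q"
    using \<open>0 < N\<close> has_period_add_mult[OF assms(1), of q 1] by simp
  show ?thesis
  proof
    assume "{V q, w} \<in> cycle_edges V N"
    then obtain n where "{V q, w} = {V n, V (Suc n)}" unfolding edges by blast
    then have "(V q = V n \<and> w = V (Suc n)) \<or> (V q = V (Suc n) \<and> w = V n)"
      by (simp add: doubleton_eq_iff)
    then show "w = V (Suc q) \<or> w = V (q + N - 1)"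
    proof (elim disjE conjE)
      assume "V q = V n" and w: "w = V (Suc n)"
      then have "q mod N = n mod N" using eq_iff by simp
      then have "Suc q mod N = Suc n mod N" by (metis mod_Suc_eq)
      then show ?thesis using w eq_iff by simp
    next
      assume "V q = V (Suc n)" and w: "w = V n"
      then have "Suc n mod N = q mod N" using eq_iff by simp
      then have "(Suc n + (N - 1)) mod N = (q + (N - 1)) mod N" by (metis mod_add_left_eq)
      moreover have "Suc n + (N - 1) = n + 1 * N" "q + (N - 1) = q + N - 1"
        using \<open>0 < N\<close> by simp_all
      ultimately have "V (q + N - 1) = V (n + 1 * N)"
        by (intro has_period_cong[OF assms(1)]) simp
      then show ?thesis using w has_period_add_mult[OF assms(1), of n 1] by simp
    qed
  next
    assume "w = V (Suc q) \<or> w = V (q + N - 1)"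
    then show "{V q, w} \<in> cycle_edges V N"
    proof
      assume "w = V (Suc q)"
      then show ?thesis unfolding edges by blast
    next
      assume "w = V (q + N - 1)"
      then have "{V q, w} = {V (q + N - 1), V (Suc (q + N - 1))}" using wrap by auto
      then show ?thesis unfolding edges by blast
    qed
  qed
qed

lemma cycle_edges_follow:
  assumes V: "has_period V N" "inj_on V {0..<N}" and V': "has_period V' N" "inj_on V' {0..<N}"
    and "3 \<le> N" and edges: "cycle_edges V' N = cycle_edges V N"
    and turn: "\<And>k. {V (Suc (\<sigma> (Suc k))), V (\<sigma> (Suc k) + N - 1)} = {V (\<sigma> k), V (\<sigma> (Suc (Suc k)))}"
    and "V' 0 = V (\<sigma> 0)" and "V' 1 = V (\<sigma> 1)"
  shows "V' k = V (\<sigma> k)"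
proof -
  have "0 < N" using \<open>3 \<le> N\<close> by simp
  have "V' k = V (\<sigma> k) \<and> V' (Suc k) = V (\<sigma> (Suc k))" for k
  proof (induction k)
    case 0
    then show ?case using \<open>V' 0 = V (\<sigma> 0)\<close> \<open>V' 1 = V (\<sigma> 1)\<close> by simp
  next
    case (Suc k)
    then have IH: "V' k = V (\<sigma> k)" "V' (Suc k) = V (\<sigma> (Suc k))" by auto
    have "{V' (Suc k), V' (Suc (Suc k))} \<in> cycle_edges V' N"
      using cycle_edges_neighbour_iff[OF V' \<open>0 < N\<close>] by blast
    then have "{V (\<sigma> (Suc k)), V' (Suc (Suc k))} \<in> cycle_edges V N"
      using IH(2) edges by simp
    then have "V' (Suc (Suc k)) \<in> {V (\<sigma> k), V (\<sigma> (Suc (Suc k)))}"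
      unfolding cycle_edges_neighbour_iff[OF V \<open>0 < N\<close>] turn[symmetric] by blast
    moreover have "V' (Suc (Suc k)) \<noteq> V' k"
    proof
      assume "V' (Suc (Suc k)) = V' k"
      then have "Suc (Suc k) mod N = k mod N" using has_period_inj_on_eq_iff[OF V' \<open>0 < N\<close>] by simp
      then have "N dvd 2" using mod_eq_dvd_iff_nat[of k "Suc (Suc k)" N] by simp
      then show False using \<open>3 \<le> N\<close> by (simp add: nat_dvd_not_less)
    qed
    ultimately show ?case using IH by auto
  qed
  then show ?thesis by blast
qed

lemma cycle_edges_eq_imp_rotation:
  assumes V: "has_period V N" "inj_on V {0..<N}" and V': "has_period V' N" "inj_on V' {0..<N}"
    and "3 \<le> N" and edges: "cycle_edges V' N = cycle_edges V N"
    and "V' 0 = V p" and "V' 1 = V (Suc p)"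
  shows "V' k = V (p + k)"
proof (rule cycle_edges_follow[OF V V' \<open>3 \<le> N\<close> edges, of "\<lambda>k. p + k"])
  fix k
  have "V (p + Suc k + N - 1) = V (p + k)"
    using V(1) unfolding has_period_def by (metis add_Suc_right diff_Suc_1 plus_nat.simps(2))
  then show "{V (Suc (p + Suc k)), V (p + Suc k + N - 1)} = {V (p + k), V (p + Suc (Suc k))}"
    by auto
qed (use assms in simp_all)

lemma cycle_edges_eq_imp_reflection:
  assumes V: "has_period V N" "inj_on V {0..<N}" and V': "has_period V' N" "inj_on V' {0..<N}"
    and "3 \<le> N" and edges: "cycle_edges V' N = cycle_edges V N"
    and "V' 0 = V p" and "V' 1 = V (p + (N - 1))"
  shows "V' k = V (p + (N - 1) * k)"
proof (rule cycle_edges_follow[OF V V' \<open>3 \<le> N\<close> edges, of "\<lambda>k. p + (N - 1) * k"])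
  fix k
  obtain N' where "N = Suc N'" using \<open>3 \<le> N\<close> by (cases N) auto
  then have wrap: "Suc (p + (N - 1) * Suc k) = (p + (N - 1) * k) + N"
    and step: "p + (N - 1) * Suc k + N - 1 = p + (N - 1) * Suc (Suc k)"
    by (simp_all add: algebra_simps)
  show "{V (Suc (p + (N - 1) * Suc k)), V (p + (N - 1) * Suc k + N - 1)}
      = {V (p + (N - 1) * k), V (p + (N - 1) * Suc (Suc k))}"
    unfolding wrap step V(1)[unfolded has_period_def, rule_format] ..
qed (use assms in simp_all)

lemma cycle_edges_eq_imp_dihedral:
  assumes V: "has_period V N" "inj_on V {0..<N}" and V': "has_period V' N" "inj_on V' {0..<N}"
    and "3 \<le> N" and edges: "cycle_edges V' N = cycle_edges V N"
  shows "\<exists>p<N. (\<forall>k. V' k = V (p + k)) \<or> (\<forall>k. V' k = V (p + (N - 1) * k))"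
proof -
  have "0 < N" using \<open>3 \<le> N\<close> by simp
  have reduce: "V (p + x) = V (p mod N + x)" for p x
    by (rule has_period_cong[OF V(1)]) (simp add: mod_add_left_eq)
  have "{V' 0, V' (Suc 0)} \<in> cycle_edges V N"
    using edges cycle_edges_neighbour_iff[OF V' \<open>0 < N\<close>] by blast
  then obtain n where "{V' 0, V' 1} = {V n, V (Suc n)}"
    unfolding cycle_edges_def by auto
  then have "(V' 0 = V n \<and> V' 1 = V (Suc n)) \<or> (V' 0 = V (Suc n) \<and> V' 1 = V n)"
    by (simp add: doubleton_eq_iff)
  moreover have "V n = V (Suc n + (N - 1))"
    using V(1) \<open>0 < N\<close> unfolding has_period_def by (metis Suc_diff_1 add_Suc_shift)
  ultimately have "(\<forall>k. V' k = V (n + k)) \<or> (\<forall>k. V' k = V (Suc n + (N - 1) * k))"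
    using cycle_edges_eq_imp_rotation[OF V V' \<open>3 \<le> N\<close> edges]
      cycle_edges_eq_imp_reflection[OF V V' \<open>3 \<le> N\<close> edges] by metis
  then show ?thesis
    using reduce \<open>0 < N\<close> by (metis mod_less_divisor)
qed

lemma is_cycle_chain_length: "is_cycle_chain m B s L \<Longrightarrow> 2 \<le> length L"
  by (simp add: is_cycle_chain_def)

definition chain_has_period :: "(nat \<times> nat) list \<Rightarrow> nat \<Rightarrow> bool" where
  "chain_has_period L t \<longleftrightarrow> (\<forall>u. L ! ((u + t) mod length L) = L ! (u mod length L))"

lemma chain_period_eq_Least:
  "chain_period L = (LEAST e. 1 \<le> e \<and> e \<le> length L \<and> chain_has_period L e)"
  unfolding chain_period_def chain_has_period_def ..

lemma chain_has_period_ch: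
  assumes "chain_has_period L t"
  shows "ch_i L (u + t) = ch_i L u" and "ch_j L (u + t) = ch_j L u"
  using assms by (simp_all add: chain_has_period_def ch_i_def ch_j_def)

lemma chain_has_period_length: "chain_has_period L (length L)"
  by (simp add: chain_has_period_def)

lemma chain_has_period_add:
  "chain_has_period L a \<Longrightarrow> chain_has_period L b \<Longrightarrow> chain_has_period L (a + b)"
  unfolding chain_has_period_def by (metis add.assoc)

lemma chain_has_period_mult:
  assumes "chain_has_period L e" shows "chain_has_period L (c * e)"
proof (induction c)
  case 0
  show ?case by (simp add: chain_has_period_def)
next
  case (Suc c)
  then show ?case using chain_has_period_add[OF assms] by simp
qed

lemma chain_has_period_mod:
  assumes a: "chain_has_period L a" and e: "chain_has_period L e"
  shows "chain_has_period L (a mod e)"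
  unfolding chain_has_period_def
proof
  fix u
  have "L ! ((u + a mod e + a div e * e) mod length L) = L ! ((u + a mod e) mod length L)"
    using chain_has_period_mult[OF e, of "a div e"] unfolding chain_has_period_def by blast
  moreover have "u + a mod e + a div e * e = u + a" by simp
  ultimately show "L ! ((u + a mod e) mod length L) = L ! (u mod length L)"
    using a unfolding chain_has_period_def by metis
qed

lemma chain_period_props:
  assumes "0 < length L"
  shows "1 \<le> chain_period L" and "chain_period L \<le> length L"
    and "chain_has_period L (chain_period L)"
proof -
  have "1 \<le> length L \<and> length L \<le> length L \<and> chain_has_period L (length L)"
    using assms by (simp add: chain_has_period_length Suc_le_eq)
  then have "1 \<le> chain_period L \<and> chain_period L \<le> length L \<and> chain_has_period L (chain_period L)"
    unfolding chain_period_eq_Least by (rule LeastI)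
  then show "1 \<le> chain_period L" "chain_period L \<le> length L"
    "chain_has_period L (chain_period L)" by auto
qed

lemma chain_period_dvd:
  assumes "0 < length L" and "chain_has_period L t"
  shows "chain_period L dvd t"
proof (rule ccontr)
  let ?e = "chain_period L"
  note e = chain_period_props[OF assms(1)]
  assume "\<not> ?e dvd t"
  then have "1 \<le> t mod ?e" by (simp add: dvd_eq_mod_eq_0)
  moreover have "t mod ?e < ?e" using e(1) by simp
  moreover have "chain_has_period L (t mod ?e)" by (rule chain_has_period_mod[OF assms(2) e(3)])
  ultimately have "?e \<le> t mod ?e"
    using e(2) unfolding chain_period_eq_Least by (intro Least_le) simp
  then show False using \<open>t mod ?e < ?e\<close> by simp
qed

lemma chain_n_mult_period:
  assumes "0 < length L" shows "chain_n L * chain_period L = length L"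
  using chain_period_dvd[OF assms chain_has_period_length] unfolding chain_n_def by simp

lemma chain_n_pos: "0 < length L \<Longrightarrow> 0 < chain_n L"
  using chain_n_mult_period by (metis gr0I mult_0)

definition walk_offset :: "(nat \<Rightarrow> nat \<Rightarrow> int) \<Rightarrow> (nat \<times> nat) list \<Rightarrow> nat \<Rightarrow> int" where
  "walk_offset s L t = (\<Sum>u<t. s (ch_i L (Suc u)) (ch_j L u) - s (ch_i L u) (ch_j L u))"

lemma walk_x_eq_offset: "walk_x m s L r t = (r + walk_offset s L t) mod m"
proof (induction t)
  case (Suc t)
  have "walk_x m s L r (Suc t) = ((r + walk_offset s L t) mod m
      - s (ch_i L t) (ch_j L t) + s (ch_i L (Suc t)) (ch_j L t)) mod m"
    using Suc by simp
  also have "\<dots> = (r + walk_offset s L t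
      - s (ch_i L t) (ch_j L t) + s (ch_i L (Suc t)) (ch_j L t)) mod m"
    by (metis mod_add_left_eq mod_diff_left_eq)
  also have "\<dots> = (r + walk_offset s L (Suc t)) mod m"
    by (simp add: walk_offset_def algebra_simps)
  finally show ?case .
qed (simp add: walk_offset_def)

lemma walk_offset_add_period:
  assumes "chain_has_period L t"
  shows "walk_offset s L (t + k) = walk_offset s L t + walk_offset s L k"
proof (induction k)
  case (Suc k)
  have "ch_i L (Suc (t + k)) = ch_i L (Suc k)" "ch_i L (t + k) = ch_i L k" "ch_j L (t + k) = ch_j L k"
    using chain_has_period_ch[OF assms, of "Suc k"] chain_has_period_ch[OF assms, of k]
    by (simp_all add: add.commute)
  with Suc show ?case by (simp add: walk_offset_def)
qed (simp add: walk_offset_def)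

lemma walk_offset_length_mod:
  assumes "is_cycle_chain m B s L" shows "walk_offset s L (length L) mod m = 0"
proof -
  have "walk_offset s L (length L)
      = - (\<Sum>t<length L. s (ch_i L t) (ch_j L t) - s (ch_i L (Suc t)) (ch_j L t))"
    by (simp add: walk_offset_def sum_negf[symmetric])
  then show ?thesis using assms unfolding is_cycle_chain_def by (simp add: mod_eq_0_iff_dvd)
qed

lemma walk_x_start_mod: "walk_x m s L (r mod m) t = walk_x m s L r t"
  by (simp add: walk_x_eq_offset mod_simps)

lemma walk_vertex_start_mod: "walk_vertex m s L (r mod m) n = walk_vertex m s L r n"
  by (simp add: walk_vertex_def walk_y_def walk_x_start_mod)

lemma walk_x_restart:
  assumes "chain_has_period L t"
  shows "walk_x m s L (walk_x m s L r t) k = walk_x m s L r (t + k)"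
  by (simp add: walk_x_eq_offset walk_offset_add_period[OF assms] mod_simps add.assoc)

lemma walk_vertex_restart:
  assumes "chain_has_period L t"
  shows "walk_vertex m s L (walk_x m s L r t) n = walk_vertex m s L r (2 * t + n)"
proof -
  have "(2 * t + n) div 2 = n div 2 + t" by simp
  then show ?thesis
    using chain_has_period_ch[OF assms, of "n div 2"]
    by (simp add: walk_vertex_def walk_y_def walk_x_restart[OF assms] add.commute)
qed

lemma walk_vertex_has_period:
  assumes "is_cycle_chain m B s L"
  shows "has_period (walk_vertex m s L r) (2 * length L)"
  unfolding has_period_def
proof
  fix n
  have "walk_x m s L r (length L) = r mod m"
    using walk_offset_length_mod[OF assms] by (metis walk_x_eq_offset add.right_neutral mod_add_right_eq)
  then have "walk_vertex m s L r (2 * length L + n) = walk_vertex m s L (r mod m) n"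
    using walk_vertex_restart[OF chain_has_period_length] by metis
  then show "walk_vertex m s L r (n + 2 * length L) = walk_vertex m s L r n"
    by (simp add: walk_vertex_start_mod add.commute)
qed

lemma traced_cycle_eq_cycle_edges:
  assumes "is_cycle_chain m B s L"
  shows "traced_cycle m s L r = cycle_edges (walk_vertex m s L r) (2 * length L)"
  using has_period_mod[OF walk_vertex_has_period[OF assms], of r "Suc n" for n]
  unfolding traced_cycle_def cycle_edges_def by simp

fun vertex_label :: "vertex \<Rightarrow> nat + nat" where
  "vertex_label (CNode i x) = Inl i"
| "vertex_label (UNode j y) = Inr j"

definition chain_label :: "(nat \<times> nat) list \<Rightarrow> nat \<Rightarrow> nat + nat" where
  "chain_label L n = (if even n then Inl (ch_i L (n div 2)) else Inr (ch_j L (n div 2)))"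

lemma vertex_label_walk_vertex: "vertex_label (walk_vertex m s L r n) = chain_label L n"
  by (simp add: walk_vertex_def chain_label_def)

lemma chain_label_has_period: "has_period (chain_label L) (2 * length L)"
  by (simp add: has_period_def chain_label_def ch_i_def ch_j_def)

lemma chain_label_Suc_Suc_neq:
  assumes "is_cycle_chain m B s L" shows "chain_label L (Suc (Suc n)) \<noteq> chain_label L n"
proof -
  let ?t = "(n div 2) mod length L"
  have "?t < length L" using is_cycle_chain_length[OF assms] by (intro mod_less_divisor) linarith
  then have "ch_i L ?t \<noteq> ch_i L (Suc ?t)" "ch_j L ?t \<noteq> ch_j L (Suc ?t)"
    using assms unfolding is_cycle_chain_def by blast+
  then have "ch_i L (n div 2) \<noteq> ch_i L (Suc (n div 2))" "ch_j L (n div 2) \<noteq> ch_j L (Suc (n div 2))"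
    by (simp_all add: ch_i_def ch_j_def mod_Suc_eq)
  then show ?thesis by (simp add: chain_label_def)
qed

lemma chain_label_rotation_imp_period:
  assumes rot: "\<forall>k. chain_label L (p + k) = chain_label L k"
  shows "even p" and "chain_has_period L (p div 2)"
proof -
  show "even p" using rot[rule_format, of 0] by (auto simp: chain_label_def split: if_splits)
  then obtain t where p: "p = 2 * t" by blast
  have "ch_i L (u + t) = ch_i L u \<and> ch_j L (u + t) = ch_j L u" for u
  proof -
    have "(2 * t + 2 * u) div 2 = u + t" "(2 * t + Suc (2 * u)) div 2 = u + t" by simp_all
    then show ?thesis
      using rot[rule_format, of "2 * u"] rot[rule_format, of "Suc (2 * u)"] p
      by (simp add: chain_label_def add.commute)
  qed
  then show "chain_has_period L (p div 2)"
    using p by (simp add: chain_has_period_def ch_i_def ch_j_def prod_eq_iff)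
qed

lemma chain_label_not_reflection:
  assumes "is_cycle_chain m B s L"
  shows "\<not> (\<forall>k. chain_label L (p + (2 * length L - 1) * k) = chain_label L k)"
proof
  define l where "l = length L"
  assume refl: "\<forall>k. chain_label L (p + (2 * length L - 1) * k) = chain_label L k"
  have "even p" using refl[rule_format, of 0] by (auto simp: chain_label_def split: if_splits)
  then obtain t where p: "p = 2 * t" by blast
  obtain l' where l': "l = Suc (Suc l')"
    using is_cycle_chain_length[OF assms] unfolding l_def by (metis add_2_eq_Suc le_Suc_ex)
  \<comment> \<open>A position \<open>k\<close> that the reflection sends to \<open>k + 2\<close>.\<close>
  obtain k c where k: "p + (2 * l - 1) * k = Suc (Suc k) + 2 * l * c"
  proof (cases t)
    case 0
    have "p + (2 * l - 1) * Suc l' = Suc (Suc (Suc l')) + 2 * l * l'"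
      using 0 p l' by (simp add: algebra_simps)
    then show ?thesis by (rule that)
  next
    case (Suc t')
    have "p + (2 * l - 1) * t' = Suc (Suc t') + 2 * l * t'"
      using Suc p l' by (simp add: algebra_simps)
    then show ?thesis by (rule that)
  qed
  then have "chain_label L (Suc (Suc k)) = chain_label L k"
    using refl has_period_add_mult[OF chain_label_has_period[of L], of "Suc (Suc k)" c]
    unfolding l_def by (metis mult.commute)
  then show False using chain_label_Suc_Suc_neq[OF assms(1)] by blast
qed

lemma traced_cycle_restart:
  assumes "is_cycle_chain m B s L" and "chain_has_period L t"
  shows "traced_cycle m s L (walk_x m s L r t) = traced_cycle m s L r"
proof -
  have "walk_vertex m s L (walk_x m s L r t) = (\<lambda>n. walk_vertex m s L r (2 * t + n))"
    using walk_vertex_restart[OF assms(2)] by blast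
  moreover have "0 < 2 * length L" using is_cycle_chain_length[OF assms(1)] by linarith
  ultimately show ?thesis
    using cycle_edges_shift[OF walk_vertex_has_period[OF assms(1)]]
    by (simp add: traced_cycle_eq_cycle_edges[OF assms(1)])
qed

lemma traced_cycle_eq_imp_restart:
  assumes al: "allowable m B s L" and "r \<in> {0..<m}" and "r' \<in> {0..<m}"
    and eq: "traced_cycle m s L r' = traced_cycle m s L r"
  shows "\<exists>t<length L. chain_has_period L t \<and> r' = walk_x m s L r t"
proof -
  let ?N = "2 * length L"
  let ?V = "walk_vertex m s L r" and ?V' = "walk_vertex m s L r'"
  have cc: "is_cycle_chain m B s L" using al by (simp add: allowable_def)
  note periodic = walk_vertex_has_period[OF cc]
  have "3 \<le> ?N" using is_cycle_chain_length[OF cc] by simp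
  have inj: "inj_on ?V {0..<?N}" "inj_on ?V' {0..<?N}"
    using al assms(2,3) by (simp_all add: allowable_def)
  have "cycle_edges ?V' ?N = cycle_edges ?V ?N"
    using eq by (simp add: traced_cycle_eq_cycle_edges[OF cc])
  then obtain p where "p < ?N"
    and dihedral: "(\<forall>k. ?V' k = ?V (p + k)) \<or> (\<forall>k. ?V' k = ?V (p + (?N - 1) * k))"
    using cycle_edges_eq_imp_dihedral[OF periodic inj(1) periodic inj(2) \<open>3 \<le> ?N\<close>] by blast
  have labels: "?V' k = ?V q \<Longrightarrow> chain_label L k = chain_label L q" for k q
    by (metis vertex_label_walk_vertex)
  have rotation: "\<forall>k. ?V' k = ?V (p + k)"
  proof (rule ccontr)
    assume "\<not> (\<forall>k. ?V' k = ?V (p + k))"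
    then have "\<forall>k. chain_label L (p + (?N - 1) * k) = chain_label L k"
      using dihedral labels by metis
    then show False using chain_label_not_reflection[OF cc] by blast
  qed
  then have "\<forall>k. chain_label L (p + k) = chain_label L k" using labels by metis
  then have "even p" and period: "chain_has_period L (p div 2)"
    by (rule chain_label_rotation_imp_period)+
  have "?V' 0 = ?V p" using rotation by simp
  then have "r' = walk_x m s L r (p div 2)"
    using \<open>even p\<close> \<open>r' \<in> {0..<m}\<close> by (simp add: walk_vertex_def)
  moreover have "p div 2 < length L" using \<open>p < ?N\<close> by simp
  ultimately show ?thesis using period by blast
qed

lemma traced_cycle_fibre:
  assumes al: "allowable m B s L" and r: "r \<in> {0..<m}"
  shows "{r' \<in> {0..<m}. traced_cycle m s L r' = traced_cycle m s L r}
    = (\<lambda>a. walk_x m s L r (a * chain_period L)) ` {..<chain_n L}"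
proof -
  have cc: "is_cycle_chain m B s L" using al by (simp add: allowable_def)
  have "0 < length L" using is_cycle_chain_length[OF cc] by linarith
  note e = chain_period_props[OF this] and n = chain_n_mult_period[OF this]
  have "0 < m" using r by simp
  show ?thesis
  proof
    show "{r' \<in> {0..<m}. traced_cycle m s L r' = traced_cycle m s L r}
      \<subseteq> (\<lambda>a. walk_x m s L r (a * chain_period L)) ` {..<chain_n L}"
    proof
      fix r' assume "r' \<in> {r' \<in> {0..<m}. traced_cycle m s L r' = traced_cycle m s L r}"
      then obtain t where "t < length L" and "chain_has_period L t" and r': "r' = walk_x m s L r t"
        using traced_cycle_eq_imp_restart[OF al r] by blast
      then obtain a where t: "t = a * chain_period L"
        using chain_period_dvd[OF \<open>0 < length L\<close>] by (metis dvd_def mult.commute)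
      then have "a < chain_n L" using \<open>t < length L\<close> n by (metis mult_less_cancel2)
      then show "r' \<in> (\<lambda>a. walk_x m s L r (a * chain_period L)) ` {..<chain_n L}"
        using r' t by blast
    qed
  next
    show "(\<lambda>a. walk_x m s L r (a * chain_period L)) ` {..<chain_n L}
      \<subseteq> {r' \<in> {0..<m}. traced_cycle m s L r' = traced_cycle m s L r}"
      using traced_cycle_restart[OF cc chain_has_period_mult[OF e(3)]] \<open>0 < m\<close>
      by (auto simp: walk_x_eq_offset)
  qed
qed

lemma card_traced_cycle_fibre:
  assumes al: "allowable m B s L" and r: "r \<in> {0..<m}"
  shows "card {r' \<in> {0..<m}. traced_cycle m s L r' = traced_cycle m s L r} = chain_n L"
proof -
  have cc: "is_cycle_chain m B s L" using al by (simp add: allowable_def)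
  have "0 < length L" using is_cycle_chain_length[OF cc] by linarith
  note e = chain_period_props[OF this] and n = chain_n_mult_period[OF this]
  have inj: "inj_on (walk_vertex m s L r) {0..<2 * length L}"
    using al r by (simp add: allowable_def)
  have bound: "c * chain_period L < length L" if "c < chain_n L" for c
    using mult_less_mono1[OF that, of "chain_period L"] e(1) n by simp
  have "inj_on (\<lambda>a. walk_x m s L r (a * chain_period L)) {..<chain_n L}"
  proof (rule inj_onI)
    fix a b assume "a \<in> {..<chain_n L}" "b \<in> {..<chain_n L}"
      and "walk_x m s L r (a * chain_period L) = walk_x m s L r (b * chain_period L)"
    moreover have "walk_vertex m s L r (2 * (c * chain_period L))
        = walk_vertex m s L (walk_x m s L r (c * chain_period L)) 0" for c
      using walk_vertex_restart[OF chain_has_period_mult[OF e(3)]] by simp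
    ultimately have "walk_vertex m s L r (2 * (a * chain_period L))
        = walk_vertex m s L r (2 * (b * chain_period L))" by metis
    moreover have "2 * (a * chain_period L) \<in> {0..<2 * length L}"
      and "2 * (b * chain_period L) \<in> {0..<2 * length L}"
      using \<open>a \<in> {..<chain_n L}\<close> \<open>b \<in> {..<chain_n L}\<close> bound by simp_all
    ultimately have "2 * (a * chain_period L) = 2 * (b * chain_period L)"
      by (rule inj_onD[OF inj])
    then show "a = b" using e(1) by simp
  qed
  then show ?thesis unfolding traced_cycle_fibre[OF al r] by (simp add: card_image)
qed

lemma card_corresponding_cycles_mult_chain_n:
  assumes "allowable m B s L"
  shows "card (corresponding_cycles m s L) * chain_n L = nat m"
proof -
  let ?C = "traced_cycle m s L"
  have "nat m = (\<Sum>C \<in> ?C ` {0..<m}. card {r \<in> {0..<m}. ?C r = C})"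
    using sum.image_gen[of "{0..<m}" "\<lambda>_. 1 :: nat" ?C] by simp
  also have "\<dots> = (\<Sum>C \<in> ?C ` {0..<m}. chain_n L)"
  proof (rule sum.cong[OF refl])
    fix C assume "C \<in> ?C ` {0..<m}"
    then obtain r where "r \<in> {0..<m}" and "C = ?C r" by blast
    then show "card {r \<in> {0..<m}. ?C r = C} = chain_n L"
      using card_traced_cycle_fibre[OF assms] by blast
  qed
  also have "\<dots> = card (corresponding_cycles m s L) * chain_n L"
    by (simp add: corresponding_cycles_def)
  finally show ?thesis by (rule sym)
qed

theorem mainTheorem8:
  fixes m :: int and B :: "nat set list" and s :: "nat \<Rightarrow> nat \<Rightarrow> int"
    and L :: "(nat \<times> nat) list"
  assumes "m \<ge> 1"
    and "\<forall>j < length B. finite (B ! j)"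
    and "allowable m B s L"
  shows "real (card (corresponding_cycles m s L)) = real_of_int m / real (chain_n L)"
proof -
  have "is_cycle_chain m B s L" using assms(3) by (simp add: allowable_def)
  then have "0 < chain_n L" using chain_n_pos is_cycle_chain_length by (metis less_le_trans pos2)
  moreover have "real (card (corresponding_cycles m s L) * chain_n L) = real (nat m)"
    using card_corresponding_cycles_mult_chain_n[OF assms(3)] by (rule arg_cong)
  ultimately show ?thesis using assms(1) by (simp add: field_simps)
qed

end
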